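(* Let $\nu\in\mathbb{N}$ and $p\in(0,1)$, and let $G_\nu$ and $g_\nu$ be the c.d.f. and p.d.f. of Student's $t$-distribution with $\nu$ degrees of freedom. For $h\in\mathbb{R}$ and $k\in\mathbb{N}$ let $f_1(h,k):=\int_{-\infty}^{\infty}G_\nu^k(t+h)g_\nu(t)\,dt$. Then there exists $K>0$ such that for every $k>K$ the equation $f_1(h,k)=p$ has a unique positive solution $h$. *)

theory Defs
  imports "HOL-Analysis.Analysis"
begin

definition student_t_pdf :: "nat \<Rightarrow> real \<Rightarrow> real" where
  "student_t_pdf \<nu> t =
     Gamma ((real \<nu> + 1) / 2) / (sqrt (real \<nu> * pi) * Gamma (real \<nu> / 2))
     * (1 + t\<^sup>2 / real \<nu>) powr (- (real \<nu> + 1) / 2)"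

definition student_t_cdf :: "nat \<Rightarrow> real \<Rightarrow> real" where
  "student_t_cdf \<nu> x = (LBINT t:{..x}. student_t_pdf \<nu> t)"

definition f1 :: "nat \<Rightarrow> real \<Rightarrow> nat \<Rightarrow> real" where
  "f1 \<nu> h k = (\<integral>t. (student_t_cdf \<nu> (t + h)) ^ k * student_t_pdf \<nu> t \<partial>lborel)"

end

theory Submission
  imports Defs "HOL-Real_Asymp.Real_Asymp"
begin

(* Let G be the c.d.f. of a positive, bounded probability density g.  Then G is strictly
   increasing, Lipschitz, below 1, and tends to 1 at infinity.  Hence h \<mapsto> f1(h,k) is continuous
   and, for k \<ge> 1, strictly increasing; by dominated convergence it tends to 1 as h \<rightarrow> \<infinity>, and
   f1(0,k) \<rightarrow> 0 as k \<rightarrow> \<infinity> because G < 1.  For large k the intermediate value theorem gives a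
   solution h > 0 of f1(h,k) = p, and strict monotonicity makes it unique.  For Student's
   density, the total mass 1 follows from the substitution t = sqrt(\<nu> x / (1 - x)), which turns
   the integral over the half-line into Euler's Beta integral B(1/2, \<nu>/2). *)

lemma integral_pos_if_pos_on:
  fixes f :: "'a \<Rightarrow> real"
  assumes f: "integrable M f" and nonneg: "AE x in M. 0 \<le> f x"
    and pos: "\<And>x. x \<in> A \<Longrightarrow> 0 < f x" and A: "A \<in> sets M" "emeasure M A \<noteq> 0"
  shows "0 < integral\<^sup>L M f"
proof -
  have "integral\<^sup>L M f \<noteq> 0"
  proof
    assume "integral\<^sup>L M f = 0"
    then have "AE x in M. f x = 0"
      using integral_nonneg_eq_0_iff_AE[OF f nonneg] by simp
    then have "AE x in M. x \<notin> A"
      by eventually_elim (use pos in force)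
    moreover have "A = {x \<in> space M. \<not> x \<notin> A}"
      using sets.sets_into_space[OF A(1)] by blast
    ultimately show False
      using AE_iff_measurable[of A M "\<lambda>x. x \<notin> A"] A by simp
  qed
  then show ?thesis
    using integral_nonneg_AE[OF nonneg] by linarith
qed

lemma abs_power_diff_le:
  fixes a b :: real
  assumes "\<bar>a\<bar> \<le> 1" "\<bar>b\<bar> \<le> 1"
  shows "\<bar>a ^ k - b ^ k\<bar> \<le> real k * \<bar>a - b\<bar>"
proof (induction k)
  case (Suc k)
  have "\<bar>a ^ Suc k - b ^ Suc k\<bar> = \<bar>a * (a ^ k - b ^ k) + b ^ k * (a - b)\<bar>"
    by (simp add: algebra_simps)
  also have "\<dots> \<le> \<bar>a\<bar> * \<bar>a ^ k - b ^ k\<bar> + \<bar>b\<bar> ^ k * \<bar>a - b\<bar>"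
    by (metis abs_mult abs_triangle_ineq power_abs)
  also have "\<dots> \<le> 1 * (real k * \<bar>a - b\<bar>) + 1 * \<bar>a - b\<bar>"
    using Suc assms by (intro add_mono mult_mono) (auto simp: power_le_one)
  finally show ?case by (simp add: algebra_simps)
qed simp

locale positive_bounded_density =
  fixes g :: "real \<Rightarrow> real" and C :: real
  assumes integrable_density: "integrable lborel g"
    and density_pos: "\<And>x. 0 < g x"
    and density_le: "\<And>x. g x \<le> C"
    and integral_density: "integral\<^sup>L lborel g = 1"
begin

definition cdf :: "real \<Rightarrow> real" where
  "cdf x = (LBINT t:{..x}. g t)"

lemma density_measurable[measurable]: "g \<in> borel_measurable borel"
  using borel_measurable_integrable[OF integrable_density] by simp

lemma set_integrable_density: "A \<in> sets borel \<Longrightarrow> set_integrable lborel A g"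
  unfolding set_integrable_def by (intro integrable_mult_indicator integrable_density) simp

lemma set_integral_density_nonneg: "0 \<le> (LBINT t:A. g t)"
  unfolding set_lebesgue_integral_def
  by (intro integral_nonneg_AE AE_I2) (simp add: indicator_def less_imp_le density_pos)

lemma set_integral_density_pos:
  assumes "A \<in> sets borel" "emeasure lborel A \<noteq> 0"
  shows "0 < (LBINT t:A. g t)"
  unfolding set_lebesgue_integral_def
proof (rule integral_pos_if_pos_on)
  show "integrable lborel (\<lambda>t. indicator A t *\<^sub>R g t)"
    using set_integrable_density[OF assms(1)] by (simp add: set_integrable_def)
qed (use assms density_pos in \<open>auto simp: indicator_def less_imp_le\<close>)

lemma set_integral_density_Ioc_le:
  assumes "x \<le> y"
  shows "(LBINT t:{x<..y}. g t) \<le> C * (y - x)"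
proof -
  have "(LBINT t:{x<..y}. g t) \<le> (LBINT t:{x<..y}. C)"
    using assms by (intro set_integral_mono set_integrable_density density_le)
      (auto simp: set_integrable_def integrable_indicator_iff)
  also have "\<dots> = C * (y - x)"
    using assms by (simp add: set_integral_const)
  finally show ?thesis .
qed

lemma cdf_add_Ioc:
  assumes "x \<le> y"
  shows "cdf y = cdf x + (LBINT t:{x<..y}. g t)"
proof -
  have "{..y} = {..x} \<union> {x<..y}" using assms by auto
  then show ?thesis
    unfolding cdf_def by (simp only:) (rule set_integral_Un; auto intro: set_integrable_density)
qed

lemma cdf_add_Ioi: "cdf x + (LBINT t:{x<..}. g t) = 1"
proof -
  have "cdf x + (LBINT t:{x<..}. g t) = (LBINT t:{..x} \<union> {x<..}. g t)"
    unfolding cdf_def by (rule set_integral_Un[symmetric]) (auto intro: set_integrable_density)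
  also have "{..x} \<union> {x<..} = UNIV" by auto
  finally show ?thesis
    using integral_density by (simp add: set_lebesgue_integral_def)
qed

lemma cdf_nonneg: "0 \<le> cdf x"
  unfolding cdf_def by (rule set_integral_density_nonneg)

lemma cdf_le_1: "cdf x \<le> 1"
  using cdf_add_Ioi[of x] set_integral_density_nonneg[of "{x<..}"] by linarith

lemma cdf_strict_mono: "strict_mono cdf"
proof (rule strict_monoI)
  fix x y :: real assume "x < y"
  then show "cdf x < cdf y"
    using cdf_add_Ioc[of x y] set_integral_density_pos[of "{x<..y}"] by simp
qed

lemma cdf_less_1: "cdf x < 1"
  using strict_monoD[OF cdf_strict_mono, of x "x + 1"] cdf_le_1[of "x + 1"] by simp

lemma cdf_lipschitz: "C-lipschitz_on UNIV cdf"
proof (rule lipschitz_onI)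
  show "0 \<le> C" using density_pos[of 0] density_le[of 0] by simp
next
  have le: "\<bar>cdf y - cdf x\<bar> \<le> C * (y - x)" if "x \<le> y" for x y
    using cdf_add_Ioc[OF that] set_integral_density_Ioc_le[OF that]
      set_integral_density_nonneg[of "{x<..y}"] by simp
  show "dist (cdf x) (cdf y) \<le> C * dist x y" for x y
    using le[of x y] le[of y x] by (cases "x \<le> y") (auto simp: dist_real_def abs_minus_commute)
qed

lemma continuous_cdf: "continuous_on UNIV cdf"
  by (rule lipschitz_on_continuous_on[OF cdf_lipschitz])

lemma cdf_measurable[measurable]: "cdf \<in> borel_measurable borel"
  by (rule borel_measurable_continuous_onI[OF continuous_cdf])

lemma cdf_tendsto_1: "(cdf \<longlongrightarrow> 1) at_top"
proof -
  have "(cdf \<longlongrightarrow> integral\<^sup>L lborel g) at_top"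
    unfolding cdf_def[abs_def] set_lebesgue_integral_def
  proof (rule integral_dominated_convergence_at_top[where w = g])
    show "AE t in lborel. ((\<lambda>x. indicator {..x} t *\<^sub>R g t) \<longlongrightarrow> g t) at_top"
    proof (rule AE_I2)
      fix t
      show "((\<lambda>x. indicator {..x} t *\<^sub>R g t) \<longlongrightarrow> g t) at_top"
        by (intro tendsto_eventually eventually_at_top_linorderI[of t]) simp
    qed
  qed (use integrable_density density_pos in \<open>auto simp: indicator_def less_imp_le\<close>)
  then show ?thesis by (simp add: integral_density)
qed

definition power_shift_integral :: "real \<Rightarrow> nat \<Rightarrow> real" where
  "power_shift_integral h k = (\<integral>t. cdf (t + h) ^ k * g t \<partial>lborel)"

lemma abs_cdf_power_mult_le: "\<bar>cdf (t + h) ^ k * g t\<bar> \<le> g t"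
  using cdf_nonneg cdf_le_1 density_pos[of t]
  by (auto simp: abs_mult intro!: mult_left_le_one_le power_le_one)

lemma integrable_cdf_power_mult: "integrable lborel (\<lambda>t. cdf (t + h) ^ k * g t)"
  by (rule Bochner_Integration.integrable_bound[OF integrable_density])
    (auto intro!: AE_I2 order_trans[OF abs_cdf_power_mult_le])

lemma power_shift_integral_lipschitz:
  "(real k * C)-lipschitz_on UNIV (\<lambda>h. power_shift_integral h k)"
proof (rule lipschitz_onI)
  show "0 \<le> real k * C" using density_pos[of 0] density_le[of 0] by simp
next
  fix h1 h2 :: real
  let ?D = "\<lambda>t. cdf (t + h1) ^ k * g t - cdf (t + h2) ^ k * g t"
  have pointwise: "\<bar>?D t\<bar> \<le> real k * C * \<bar>h1 - h2\<bar> * g t" for t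
  proof -
    have "\<bar>cdf (t + h1) ^ k - cdf (t + h2) ^ k\<bar> \<le> real k * \<bar>cdf (t + h1) - cdf (t + h2)\<bar>"
      using cdf_nonneg cdf_le_1 by (intro abs_power_diff_le) (auto simp: abs_le_iff)
    also have "\<dots> \<le> real k * (C * \<bar>h1 - h2\<bar>)"
      using lipschitz_onD[OF cdf_lipschitz, of "t + h1" "t + h2"]
      by (intro mult_left_mono) (auto simp: dist_real_def)
    finally show ?thesis
      using density_pos[of t]
      by (auto simp: abs_mult left_diff_distrib[symmetric] intro: mult_right_mono)
  qed
  have "\<bar>power_shift_integral h1 k - power_shift_integral h2 k\<bar> = \<bar>integral\<^sup>L lborel ?D\<bar>"
    unfolding power_shift_integral_def by (simp add: integrable_cdf_power_mult)
  also have "\<dots> \<le> (\<integral>t. real k * C * \<bar>h1 - h2\<bar> * g t \<partial>lborel)"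
    using pointwise
    by (intro integral_abs_bound_integral) (auto simp: integrable_cdf_power_mult integrable_density)
  also have "\<dots> = real k * C * \<bar>h1 - h2\<bar>"
    by (simp add: integral_density)
  finally show "dist (power_shift_integral h1 k) (power_shift_integral h2 k) \<le> real k * C * dist h1 h2"
    by (simp add: dist_real_def)
qed

lemma continuous_power_shift_integral: "continuous_on A (\<lambda>h. power_shift_integral h k)"
  by (rule continuous_on_subset[OF lipschitz_on_continuous_on[OF power_shift_integral_lipschitz]])
    simp

lemma power_shift_integral_strict_mono:
  assumes "k \<ge> 1"
  shows "strict_mono (\<lambda>h. power_shift_integral h k)"
proof (rule strict_monoI)
  fix h1 h2 :: real assume "h1 < h2"
  let ?D = "\<lambda>t. cdf (t + h2) ^ k * g t - cdf (t + h1) ^ k * g t"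
  have pos: "0 < ?D t" for t
  proof -
    have "cdf (t + h1) ^ k < cdf (t + h2) ^ k"
      using strict_monoD[OF cdf_strict_mono, of "t + h1" "t + h2"] \<open>h1 < h2\<close> assms cdf_nonneg
      by (intro power_strict_mono) auto
    then show ?thesis
      using density_pos[of t] by (simp add: left_diff_distrib[symmetric])
  qed
  have "0 < integral\<^sup>L lborel ?D"
    by (rule integral_pos_if_pos_on[where A = UNIV])
      (use pos in \<open>auto simp: integrable_cdf_power_mult less_imp_le\<close>)
  then show "power_shift_integral h1 k < power_shift_integral h2 k"
    unfolding power_shift_integral_def by (simp add: integrable_cdf_power_mult)
qed

lemma power_shift_integral_tendsto_1: "((\<lambda>h. power_shift_integral h k) \<longlongrightarrow> 1) at_top"
proof -
  have "((\<lambda>h. power_shift_integral h k) \<longlongrightarrow> integral\<^sup>L lborel g) at_top"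
    unfolding power_shift_integral_def
  proof (rule integral_dominated_convergence_at_top[where w = g])
    show "AE t in lborel. ((\<lambda>h. cdf (t + h) ^ k * g t) \<longlongrightarrow> g t) at_top"
    proof (rule AE_I2)
      fix t
      have "((\<lambda>h. cdf (t + h)) \<longlongrightarrow> 1) at_top"
        by (rule filterlim_compose[OF cdf_tendsto_1
              filterlim_tendsto_add_at_top[OF tendsto_const filterlim_ident]])
      from tendsto_mult[OF tendsto_power[OF this, of k] tendsto_const[of "g t"]]
      show "((\<lambda>h. cdf (t + h) ^ k * g t) \<longlongrightarrow> g t) at_top" by simp
    qed
  qed (auto simp: integrable_density abs_cdf_power_mult_le)
  then show ?thesis by (simp add: integral_density)
qed

lemma power_shift_integral_tendsto_0: "(\<lambda>k. power_shift_integral h k) \<longlonglongrightarrow> 0"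
proof -
  have "(\<lambda>k. power_shift_integral h k) \<longlonglongrightarrow> integral\<^sup>L lborel (\<lambda>t::real. 0::real)"
    unfolding power_shift_integral_def
  proof (rule integral_dominated_convergence[where w = g])
    show "AE t in lborel. (\<lambda>k. cdf (t + h) ^ k * g t) \<longlonglongrightarrow> 0"
    proof (rule AE_I2)
      fix t
      have "norm (cdf (t + h)) < 1"
        using cdf_nonneg cdf_less_1 by simp
      then show "(\<lambda>k. cdf (t + h) ^ k * g t) \<longlonglongrightarrow> 0"
        using tendsto_mult_left_zero[OF LIMSEQ_power_zero] by blast
    qed
  qed (auto simp: integrable_density integrable_cdf_power_mult abs_cdf_power_mult_le)
  then show ?thesis by simp
qed

theorem power_shift_integral_unique_positive_solution:
  assumes "0 < p" "p < 1"
  shows "\<exists>K>0. \<forall>k. real k > K \<longrightarrow> (\<exists>!h. h > 0 \<and> power_shift_integral h k = p)"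
proof -
  obtain N where N: "\<And>k. k \<ge> N \<Longrightarrow> power_shift_integral 0 k < p"
    using order_tendstoD(2)[OF power_shift_integral_tendsto_0 assms(1)]
    unfolding eventually_sequentially by auto
  have "\<exists>!h. h > 0 \<and> power_shift_integral h k = p" if k: "real k > real N + 1" for k
  proof -
    have at_0: "power_shift_integral 0 k < p" using N k by simp
    obtain b where "b \<ge> 0" "power_shift_integral b k > p"
      using order_tendstoD(1)[OF power_shift_integral_tendsto_1 assms(2)]
      unfolding eventually_at_top_linorder by (metis linorder_le_cases order_refl)
    then obtain h where h: "0 \<le> h" "power_shift_integral h k = p"
      using IVT'[of "\<lambda>h. power_shift_integral h k" 0 p b] at_0 continuous_power_shift_integral
      by force
    with at_0 have "h > 0" by (cases "h = 0") auto
    moreover have "strict_mono (\<lambda>h. power_shift_integral h k)"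
      using k by (intro power_shift_integral_strict_mono) simp
    ultimately show ?thesis
      using h strict_mono_eq by (intro ex1I[of _ h]) fastforce+
  qed
  then show ?thesis by (intro exI[of _ "real N + 1"]) auto
qed

end

lemma has_real_derivative_sqrt_ratio:
  fixes a x :: real
  assumes "0 < a" "0 < x" "x < 1"
  shows "((\<lambda>x. sqrt (a * x / (1 - x))) has_real_derivative
           sqrt a / 2 * x powr (-1/2) * (1 - x) powr (-3/2)) (at x)"
proof -
  have x1: "0 < 1 - x" using assms by simp
  have "((\<lambda>x. sqrt (a * x / (1 - x))) has_real_derivative
           inverse (sqrt (a * x / (1 - x))) / 2 * (a / (1 - x)\<^sup>2)) (at x)"
    using assms by (auto intro!: derivative_eq_intros simp: field_simps power2_eq_square mult_less_0_iff)
  moreover have "x powr (-1/2) = 1 / sqrt x"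
    using assms by (simp add: powr_minus_divide powr_half_sqrt[symmetric])
  moreover have "(1 - x) powr (-3/2) = 1 / ((1 - x) * sqrt (1 - x))"
  proof -
    have "(1 - x) powr (3/2) = (1 - x) * sqrt (1 - x)"
      using powr_add[of "1 - x" 1 "1/2"] x1 by (simp add: powr_half_sqrt)
    then show ?thesis by (simp add: powr_minus_divide)
  qed
  moreover have "inverse (sqrt (a * x / (1 - x))) / 2 * (a / (1 - x)\<^sup>2)
      = sqrt a / 2 * (1 / sqrt x) * (1 / ((1 - x) * sqrt (1 - x)))"
  proof -
    define s u v where "s = sqrt a" and "u = sqrt x" and "v = sqrt (1 - x)"
    have pos: "0 < s" "0 < u" "0 < v" using assms x1 by (simp_all add: s_def u_def v_def)
    have "sqrt (a * x / (1 - x)) = s * u / v"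
      using assms x1 by (simp add: s_def u_def v_def real_sqrt_mult real_sqrt_divide)
    moreover have "a = s * s" "1 - x = v * v"
      using assms x1 by (simp_all add: s_def v_def)
    moreover have "inverse (s * u / v) / 2 * (s * s / (v * v)\<^sup>2) = s / 2 * (1 / u) * (1 / (v * v * v))"
      using pos by (simp add: field_simps power2_eq_square)
    ultimately show ?thesis
      unfolding s_def[symmetric] u_def[symmetric] v_def[symmetric] by simp
  qed
  ultimately show ?thesis by simp
qed

lemma sqrt_ratio_tendsto_0: "((\<lambda>x. sqrt (a * x / (1 - x))) \<longlongrightarrow> 0) (at_right (0::real))"
  by (auto intro!: tendsto_eq_intros)

lemma sqrt_ratio_tendsto_at_top:
  assumes "0 < (a::real)"
  shows "filterlim (\<lambda>x. sqrt (a * x / (1 - x))) at_top (at_left 1)"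
  using assms by real_asymp

lemma
  fixes a b :: real
  assumes "0 < a" "0 < b"
  shows set_integrable_Beta_Ioo: "set_integrable lborel {0<..<1} (\<lambda>t. t powr (a - 1) * (1 - t) powr (b - 1))"
    and set_integral_Beta_Ioo: "(LBINT t:{0<..<1}. t powr (a - 1) * (1 - t) powr (b - 1)) = Beta a b"
proof -
  show int: "set_integrable lborel {0<..<1} (\<lambda>t. t powr (a - 1) * (1 - t) powr (b - 1))"
    by (rule set_integrable_subset[OF integrable_Beta[OF assms]]) auto
  have "((\<lambda>t. t powr (a - 1) * (1 - t) powr (b - 1)) has_integral Beta a b) {0<..<1}"
    using has_integral_Beta_real[OF assms] by (simp add: has_integral_Icc_iff_Ioo)
  then show "(LBINT t:{0<..<1}. t powr (a - 1) * (1 - t) powr (b - 1)) = Beta a b"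
    using set_borel_integral_eq_integral(2)[OF int] by (simp add: integral_unique)
qed

definition student_t_kernel :: "nat \<Rightarrow> real \<Rightarrow> real" where
  "student_t_kernel \<nu> t = (1 + t\<^sup>2 / real \<nu>) powr (- (real \<nu> + 1) / 2)"

lemma student_t_kernel_base_pos: "0 < 1 + t\<^sup>2 / real \<nu>"
  by (simp add: add_pos_nonneg)

lemma student_t_kernel_pos: "0 < student_t_kernel \<nu> t"
  using student_t_kernel_base_pos[of t \<nu>] unfolding student_t_kernel_def by simp

lemma student_t_kernel_le_1: "student_t_kernel \<nu> t \<le> 1"
proof -
  have "1 \<le> 1 + t\<^sup>2 / real \<nu>" by simp
  then have "(1 + t\<^sup>2 / real \<nu>) powr (- (real \<nu> + 1) / 2) \<le> (1 + t\<^sup>2 / real \<nu>) powr 0"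
    by (intro powr_mono) auto
  then show ?thesis
    using student_t_kernel_base_pos[of t \<nu>] unfolding student_t_kernel_def by simp
qed

lemma student_t_kernel_minus: "student_t_kernel \<nu> (- t) = student_t_kernel \<nu> t"
  unfolding student_t_kernel_def by simp

lemma isCont_student_t_kernel: "isCont (student_t_kernel \<nu>) t"
  \<comment> \<open>as a product with \<open>inverse (real \<nu>)\<close> the term needs no side condition \<open>\<nu> \<noteq> 0\<close>\<close>
  unfolding student_t_kernel_def[abs_def] divide_inverse[of "_\<^sup>2"]
  using student_t_kernel_base_pos[of t \<nu>] by (intro continuous_intros) (auto simp: divide_inverse)

lemma student_t_kernel_sqrt_ratio:
  assumes "\<nu> \<ge> 1" "0 < x" "x < 1"
  shows "student_t_kernel \<nu> (sqrt (real \<nu> * x / (1 - x))) = (1 - x) powr ((real \<nu> + 1) / 2)"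
proof -
  have "1 + (sqrt (real \<nu> * x / (1 - x)))\<^sup>2 / real \<nu> = inverse (1 - x)"
    using assms by (simp add: field_simps)
  moreover have "- (real \<nu> + 1) / 2 = - ((real \<nu> + 1) / 2)" by linarith
  ultimately show ?thesis
    using assms unfolding student_t_kernel_def
    by (simp only: powr_minus inverse_powr[of "1 - x"] inverse_inverse_eq)
qed

lemma student_t_kernel_substitution:
  assumes "\<nu> \<ge> 1" "0 < x" "x < 1"
  shows "student_t_kernel \<nu> (sqrt (real \<nu> * x / (1 - x)))
           * (sqrt (real \<nu>) / 2 * x powr (-1/2) * (1 - x) powr (-3/2))
         = sqrt (real \<nu>) / 2 * (x powr (1/2 - 1) * (1 - x) powr (real \<nu> / 2 - 1))"
proof -
  have "(real \<nu> + 1) / 2 + -3/2 = real \<nu> / 2 - 1" by (simp add: field_simps)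
  then have "(1 - x) powr ((real \<nu> + 1) / 2) * (1 - x) powr (-3/2) = (1 - x) powr (real \<nu> / 2 - 1)"
    by (metis powr_add)
  then show ?thesis
    unfolding student_t_kernel_sqrt_ratio[OF assms] by (simp add: mult_ac)
qed

lemma
  assumes "\<nu> \<ge> 1"
  shows set_integrable_student_t_kernel_Ioi: "set_integrable lborel {0<..} (student_t_kernel \<nu>)"
    and set_integral_student_t_kernel_Ioi:
      "(LBINT t:{0<..}. student_t_kernel \<nu> t) = sqrt (real \<nu>) / 2 * Beta (1/2) (real \<nu> / 2)"
proof -
  define \<phi> where "\<phi> = (\<lambda>x. sqrt (real \<nu> * x / (1 - x)))"
  define \<phi>' where "\<phi>' = (\<lambda>x. sqrt (real \<nu>) / 2 * x powr (-1/2) * (1 - x) powr (-3/2))"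
  define B where "B = (\<lambda>x. x powr (1/2 - 1) * (1 - x) powr (real \<nu> / 2 - 1))"
  have \<nu>: "0 < real \<nu>" "0 < real \<nu> / 2" using assms by simp_all
  have integrand: "student_t_kernel \<nu> (\<phi> x) * \<phi>' x = sqrt (real \<nu>) / 2 * B x"
    if "0 < x" "x < 1" for x
    using student_t_kernel_substitution[OF assms that] by (simp add: \<phi>_def \<phi>'_def B_def)
  have Ioo: "einterval 0 1 = {0<..<(1::real)}"
    by (simp add: zero_ereal_def one_ereal_def)
  have "set_integrable lborel {0<..<1} (\<lambda>x. sqrt (real \<nu>) / 2 * B x)"
    using set_integrable_Beta_Ioo[of "1/2" "real \<nu> / 2"] \<nu> by (simp add: B_def)
  moreover have "set_integrable lborel {0<..<1} (\<lambda>x. student_t_kernel \<nu> (\<phi> x) * \<phi>' x) =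
      set_integrable lborel {0<..<1} (\<lambda>x. sqrt (real \<nu>) / 2 * B x)"
    by (rule set_integrable_cong) (auto simp: integrand)
  ultimately have integrable:
      "set_integrable lborel (einterval 0 1) (\<lambda>x. student_t_kernel \<nu> (\<phi> x) * \<phi>' x)"
    unfolding Ioo by simp
  have "((ereal \<circ> \<phi> \<circ> real_of_ereal) \<longlongrightarrow> 0) (at_right 0)"
    using sqrt_ratio_tendsto_0 unfolding \<phi>_def zero_ereal_def ereal_tendsto_simps by simp
  moreover have "((ereal \<circ> \<phi> \<circ> real_of_ereal) \<longlongrightarrow> \<infinity>) (at_left 1)"
    using sqrt_ratio_tendsto_at_top[OF \<nu>(1)] unfolding \<phi>_def one_ereal_def ereal_tendsto_simps by simp
  ultimately have substitution:
    "set_integrable lborel (einterval 0 \<infinity>) (student_t_kernel \<nu>) \<and>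
     (LBINT t=0..\<infinity>. student_t_kernel \<nu> t) = (LBINT x=0..1. student_t_kernel \<nu> (\<phi> x) * \<phi>' x)"
    using has_real_derivative_sqrt_ratio[OF \<nu>(1)] integrable
    by (intro conjI interval_integral_substitution_nonneg
        [where f = "student_t_kernel \<nu>" and g = \<phi> and g' = \<phi>'])
      (auto simp: \<phi>_def \<phi>'_def zero_ereal_def one_ereal_def less_imp_le student_t_kernel_pos
        isCont_student_t_kernel intro!: continuous_intros)
  from substitution show "set_integrable lborel {0<..} (student_t_kernel \<nu>)"
    by (simp add: zero_ereal_def)
  have "(LBINT t:{0<..}. student_t_kernel \<nu> t) = (LBINT x:{0<..<1}. student_t_kernel \<nu> (\<phi> x) * \<phi>' x)"
    using conjunct2[OF substitution] interval_lebesgue_integral_le_eq[of 0 1 lborel] Ioo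
    by (simp add: interval_lebesgue_integral_0_infty)
  also have "\<dots> = (LBINT x:{0<..<1}. sqrt (real \<nu>) / 2 * B x)"
    by (rule set_lebesgue_integral_cong) (auto simp: integrand)
  also have "\<dots> = sqrt (real \<nu>) / 2 * Beta (1/2) (real \<nu> / 2)"
    using set_integral_Beta_Ioo[of "1/2" "real \<nu> / 2"] \<nu> by (simp add: B_def)
  finally show "(LBINT t:{0<..}. student_t_kernel \<nu> t) = sqrt (real \<nu>) / 2 * Beta (1/2) (real \<nu> / 2)" .
qed

lemma
  assumes "\<nu> \<ge> 1"
  shows integrable_student_t_kernel: "integrable lborel (student_t_kernel \<nu>)"
    and integral_student_t_kernel:
      "integral\<^sup>L lborel (student_t_kernel \<nu>) = sqrt (real \<nu>) * Beta (1/2) (real \<nu> / 2)"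
proof -
  have even: "(\<lambda>t. student_t_kernel \<nu> (- t)) = student_t_kernel \<nu>"
    by (simp add: student_t_kernel_minus)
  have "interval_lebesgue_integrable lborel 0 \<infinity> (student_t_kernel \<nu>)"
    using set_integrable_student_t_kernel_Ioi[OF assms]
    by (simp add: interval_lebesgue_integral_0_infty)
  then have left: "interval_lebesgue_integrable lborel (-\<infinity>) 0 (student_t_kernel \<nu>)"
    using interval_integrable_mirror[of 0 \<infinity> "student_t_kernel \<nu>"] unfolding even by simp
  have "set_integrable lborel ({..<0} \<union> {0..1} \<union> {0<..}) (student_t_kernel \<nu>)"
  proof (intro set_integrable_Un)
    show "set_integrable lborel {..<0} (student_t_kernel \<nu>)"
      using left by (simp add: interval_lebesgue_integrable_def zero_ereal_def)
    show "set_integrable lborel {0..1} (student_t_kernel \<nu>)"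
      unfolding set_integrable_def
      by (intro borel_integrable_compact continuous_at_imp_continuous_on ballI
          isCont_student_t_kernel) simp
  qed (use set_integrable_student_t_kernel_Ioi[OF assms] in auto)
  moreover have "{..<0} \<union> {0..1} \<union> {0<..} = (UNIV :: real set)" by auto
  ultimately have whole: "set_integrable lborel UNIV (student_t_kernel \<nu>)" by simp
  then show "integrable lborel (student_t_kernel \<nu>)"
    by (simp add: set_integrable_def)
  have "integral\<^sup>L lborel (student_t_kernel \<nu>) = (LBINT t=-\<infinity>..\<infinity>. student_t_kernel \<nu> t)"
    by (simp add: interval_lebesgue_integral_le_eq set_lebesgue_integral_def)
  also have "\<dots> = (LBINT t=-\<infinity>..0. student_t_kernel \<nu> t) + (LBINT t=0..\<infinity>. student_t_kernel \<nu> t)"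
    using whole by (intro interval_integral_sum[symmetric]) (simp add: interval_lebesgue_integrable_def)
  also have "(LBINT t=-\<infinity>..0. student_t_kernel \<nu> t) = (LBINT t=0..\<infinity>. student_t_kernel \<nu> t)"
    using interval_integral_reflect[of "-\<infinity>" 0 "student_t_kernel \<nu>"] by (simp add: even)
  also have "(LBINT t=0..\<infinity>. student_t_kernel \<nu> t) = sqrt (real \<nu>) / 2 * Beta (1/2) (real \<nu> / 2)"
    using set_integral_student_t_kernel_Ioi[OF assms] by (simp add: interval_lebesgue_integral_0_infty)
  finally show "integral\<^sup>L lborel (student_t_kernel \<nu>) = sqrt (real \<nu>) * Beta (1/2) (real \<nu> / 2)"
    by simp
qed

definition student_t_const :: "nat \<Rightarrow> real" where
  "student_t_const \<nu> = Gamma ((real \<nu> + 1) / 2) / (sqrt (real \<nu> * pi) * Gamma (real \<nu> / 2))"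

lemma student_t_pdf_eq_const_mult_kernel:
  "student_t_pdf \<nu> t = student_t_const \<nu> * student_t_kernel \<nu> t"
  unfolding student_t_pdf_def student_t_const_def student_t_kernel_def ..

lemma student_t_const_pos: "\<nu> \<ge> 1 \<Longrightarrow> 0 < student_t_const \<nu>"
  unfolding student_t_const_def by (intro divide_pos_pos mult_pos_pos Gamma_real_pos) auto

lemma student_t_const_mult_Beta:
  assumes "\<nu> \<ge> 1"
  shows "student_t_const \<nu> * (sqrt (real \<nu>) * Beta (1/2) (real \<nu> / 2)) = 1"
proof -
  define a b where "a = Gamma (real \<nu> / 2)" and "b = Gamma ((real \<nu> + 1) / 2)"
  have pos: "0 < a" "0 < b"
    using assms by (auto simp: a_def b_def intro!: Gamma_real_pos)
  have half_sum: "1/2 + real \<nu> / 2 = (real \<nu> + 1) / 2" by simp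
  have Beta: "Beta (1/2) (real \<nu> / 2) = sqrt pi * a / b"
    unfolding Beta_def Gamma_one_half_real half_sum a_def b_def ..
  show ?thesis
    using pos assms unfolding student_t_const_def Beta a_def[symmetric] b_def[symmetric]
    by (simp add: real_sqrt_mult field_simps)
qed

lemma positive_bounded_density_student_t:
  assumes "\<nu> \<ge> 1"
  shows "positive_bounded_density (student_t_pdf \<nu>) (student_t_const \<nu>)"
proof
  show "integrable lborel (student_t_pdf \<nu>)"
    using integrable_student_t_kernel[OF assms]
    by (simp add: student_t_pdf_eq_const_mult_kernel[abs_def])
  show "integral\<^sup>L lborel (student_t_pdf \<nu>) = 1"
    using integral_student_t_kernel[OF assms] student_t_const_mult_Beta[OF assms]
    by (simp add: student_t_pdf_eq_const_mult_kernel[abs_def])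
  show "0 < student_t_pdf \<nu> x" for x
    using student_t_const_pos[OF assms] student_t_kernel_pos
    by (simp add: student_t_pdf_eq_const_mult_kernel)
  show "student_t_pdf \<nu> x \<le> student_t_const \<nu>" for x
    using student_t_const_pos[OF assms] student_t_kernel_le_1[of \<nu> x]
    by (simp add: student_t_pdf_eq_const_mult_kernel)
qed

theorem lemma3:
  fixes \<nu> :: nat and p :: real
  assumes "\<nu> \<ge> 1" and "0 < p" and "p < 1"
  shows "\<exists>K::real. K > 0 \<and>
           (\<forall>k::nat. real k > K \<longrightarrow> (\<exists>!h::real. h > 0 \<and> f1 \<nu> h k = p))"
proof -
  interpret positive_bounded_density "student_t_pdf \<nu>" "student_t_const \<nu>"
    by (rule positive_bounded_density_student_t[OF assms(1)])
  have "f1 \<nu> h k = power_shift_integral h k" for h k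
    unfolding f1_def power_shift_integral_def cdf_def student_t_cdf_def ..
  then show ?thesis
    using power_shift_integral_unique_positive_solution[OF assms(2,3)] by simp
qed

end
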